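(* There is no $1$-dimensional freezing cellular automaton $F$ that simulates every $1$-dimensional freezing cellular automaton with neighborhood $\mathrm{VN}_1=\{-1,0,1\}$, even when simulations with arbitrary finite context $C$ are allowed.
   Context: A $d$-dimensional cellular automaton (CA) is $F=(d,Q,N,f)$ with $Q$ finite, $N\subset\mathbb{Z}^d$ finite, $f:Q^N\to Q$, global map $F(c)_z=f(c|_{z+N})$. A CA is freezing if there is a partial order $\preceq$ on $Q$ with $F(c)_z\preceq c_z$ for all $c,z$. Simulation: $F$ simulates $G$ (same dimension $d$) with slowdown $T>0$, rectangular block $B\subseteq\mathbb{Z}^d$ of size-vector $b$ and context $C$ (finite, $\vec0\in C$) if there is $\phi:Q_G^C\to Q_F^B$ such that $\bar\phi(c)_{bz+r}=\phi(c|_{z+C})_r$ ($bz$ componentwise) defines an injective map $\bar\phi$ with $\bar\phi(G(c))=F^T(\bar\phi(c))$ for all $c$. *)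

theory Defs
  imports Main
begin

text \<open>A local pattern in
  Q^N is represented as a function int => 'a that is undefined outside N.\<close>

definition restr :: "int set \<Rightarrow> (int \<Rightarrow> 'a) \<Rightarrow> (int \<Rightarrow> 'a)" where
  "restr N p = (\<lambda>n. if n \<in> N then p n else undefined)"

definition configs :: "'a set \<Rightarrow> (int \<Rightarrow> 'a) set" where
  "configs Q = {c. \<forall>z. c z \<in> Q}"

definition is_CA :: "'a set \<Rightarrow> int set \<Rightarrow> ((int \<Rightarrow> 'a) \<Rightarrow> 'a) \<Rightarrow> bool" where
  "is_CA Q N f \<longleftrightarrow> finite Q \<and> finite N \<and>
     (\<forall>p. (\<forall>n\<in>N. p n \<in> Q) \<longrightarrow> f (restr N p) \<in> Q)"

definition glob :: "int set \<Rightarrow> ((int \<Rightarrow> 'a) \<Rightarrow> 'a) \<Rightarrow> (int \<Rightarrow> 'a) \<Rightarrow> (int \<Rightarrow> 'a)" where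
  "glob N f c = (\<lambda>z. f (restr N (\<lambda>n. c (z + n))))"

definition freezing :: "'a set \<Rightarrow> int set \<Rightarrow> ((int \<Rightarrow> 'a) \<Rightarrow> 'a) \<Rightarrow> bool" where
  "freezing Q N f \<longleftrightarrow> (\<exists>R. partial_order_on Q R \<and>
     (\<forall>c\<in>configs Q. \<forall>z. (glob N f c z, c z) \<in> R))"

definition phibar :: "int \<Rightarrow> int set \<Rightarrow> ((int \<Rightarrow> 'b) \<Rightarrow> (int \<Rightarrow> 'a)) \<Rightarrow> (int \<Rightarrow> 'b) \<Rightarrow> (int \<Rightarrow> 'a)" where
  "phibar b C \<phi> c = (\<lambda>x. \<phi> (restr C (\<lambda>k. c (x div b + k))) (x mod b))"

definition simulates :: "'a set \<Rightarrow> int set \<Rightarrow> ((int \<Rightarrow> 'a) \<Rightarrow> 'a) \<Rightarrow>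
    'b set \<Rightarrow> int set \<Rightarrow> ((int \<Rightarrow> 'b) \<Rightarrow> 'b) \<Rightarrow> bool" where
  "simulates QF NF fF QG NG fG \<longleftrightarrow>
    (\<exists>(T::nat) (b::int) (C::int set) (\<phi>::(int \<Rightarrow> 'b) \<Rightarrow> (int \<Rightarrow> 'a)).
       T > 0 \<and> b > 0 \<and> finite C \<and> 0 \<in> C \<and>
       (\<forall>p. (\<forall>k\<in>C. p k \<in> QG) \<longrightarrow> (\<forall>r\<in>{0..<b}. \<phi> (restr C p) r \<in> QF)) \<and>
       inj_on (phibar b C \<phi>) (configs QG) \<and>
       (\<forall>c\<in>configs QG. phibar b C \<phi> (glob NG fG c) = (glob NF fF ^^ T) (phibar b C \<phi> c)))"

end

theory Submission
  imports Defs
begin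

text \<open>For the freezing CA \<open>F\<close> with radius \<open>r\<close> and \<open>q\<close> states, consider the freezing CA
  \<open>G\<^sub>N\<close> with states \<open>0..N\<close> in which a cell in state \<open>m \<ge> 4\<close> counts down by one per step,
  while signals \<open>1, 2\<close> travel right at speed one through the quiescent state \<open>3\<close>.  Suppose \<open>F\<close>
  simulates \<open>G\<^sub>N\<close> with slowdown \<open>T\<close> and blocks of length \<open>b\<close>.  Since information in \<open>F\<close>
  travels at most \<open>r\<close> cells per step, the signals force \<open>b \<le> r T\<close>.  The uniform configuration
  with value \<open>N\<close> is encoded by a \<open>b\<close>-periodic configuration of \<open>F\<close>, which can change at most
  \<open>b (q - 1)\<close> times because each cell descends a chain of length at most \<open>q\<close>; yet it keeps
  changing during the \<open>(N - 4) T + 1\<close> steps simulating the countdown.  Hence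
  \<open>(N - 4) T < b (q - 1) \<le> r T (q - 1)\<close>, which fails for \<open>N = r (q - 1) + 4\<close>.\<close>

lemma finite_int_set_bounded:
  fixes A :: "int set"
  assumes "finite A"
  obtains r :: nat where "\<forall>a\<in>A. \<bar>a\<bar> \<le> int r"
proof
  show "\<forall>a\<in>A. \<bar>a\<bar> \<le> int (nat (\<Sum>a\<in>A. \<bar>a\<bar>))"
    using assms by (auto intro: member_le_sum)
qed

lemma funpow_fixpoint_stable:
  fixes f :: "'a \<Rightarrow> 'a"
  assumes "(f ^^ Suc s) x = (f ^^ s) x" "s \<le> t"
  shows "(f ^^ t) x = (f ^^ s) x"
  using assms(2)
proof (induction t rule: dec_induct)
  case (step n)
  have "(f ^^ Suc n) x = f ((f ^^ s) x)" using step.IH by simp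
  also have "\<dots> = (f ^^ s) x" using assms(1) by simp
  finally show ?case .
qed simp

lemma int_slope_le_of_linear_bound:
  fixes a c A :: int
  assumes "\<forall>k::nat. a * int k < A + c * int k"
  shows "a \<le> c"
proof (rule ccontr)
  assume "\<not> a \<le> c"
  then have "(c + 1) * int (nat A) \<le> a * int (nat A)" by (intro mult_right_mono) auto
  moreover have "a * int (nat A) < A + c * int (nat A)" using assms by blast
  moreover have "A \<le> int (nat A)" by simp
  ultimately show False by (simp add: algebra_simps)
qed

lemma glob_in_configs: "is_CA Q N f \<Longrightarrow> c \<in> configs Q \<Longrightarrow> glob N f c \<in> configs Q"
  unfolding is_CA_def configs_def glob_def by simp

lemma funpow_glob_in_configs: "is_CA Q N f \<Longrightarrow> c \<in> configs Q \<Longrightarrow> (glob N f ^^ t) c \<in> configs Q"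
  by (induction t) (auto intro: glob_in_configs)

lemma funpow_glob_eq_from:
  assumes "\<forall>n\<in>N. \<bar>n\<bar> \<le> int r" "\<forall>x\<ge>a. c x = c' x"
  shows "\<forall>x \<ge> a + int r * int t. (glob N f ^^ t) c x = (glob N f ^^ t) c' x"
proof (induction t)
  case 0
  then show ?case using assms(2) by simp
next
  case (Suc t)
  show ?case
  proof (intro allI impI)
    fix x assume x: "x \<ge> a + int r * int (Suc t)"
    have "x + n \<ge> a + int r * int t" if "n \<in> N" for n
      using x assms(1) that by (fastforce simp: algebra_simps)
    then have "restr N (\<lambda>n. (glob N f ^^ t) c (x + n)) = restr N (\<lambda>n. (glob N f ^^ t) c' (x + n))"
      using Suc.IH by (auto simp: restr_def)
    then show "(glob N f ^^ Suc t) c x = (glob N f ^^ Suc t) c' x" by (simp add: glob_def)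
  qed
qed

lemma glob_periodic:
  assumes "\<forall>x. c x = c (x mod b)"
  shows "\<forall>x. glob N f c x = glob N f c (x mod b)"
proof
  fix x
  have "c (x + n) = c (x mod b + n)" for n
  proof -
    have "c (x + n) = c ((x + n) mod b)" using assms ..
    also have "\<dots> = c ((x mod b + n) mod b)" by (simp add: mod_add_left_eq)
    also have "\<dots> = c (x mod b + n)" using spec[OF assms, of "x mod b + n"] by simp
    finally show ?thesis .
  qed
  then show "glob N f c x = glob N f c (x mod b)" by (simp add: glob_def)
qed

lemma funpow_glob_periodic:
  "\<forall>x. c x = c (x mod b) \<Longrightarrow> \<forall>x. (glob N f ^^ t) c x = (glob N f ^^ t) c (x mod b)"
proof (induction t)
  case (Suc t)
  then show ?case using glob_periodic[of "(glob N f ^^ t) c" b N f] by simp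
qed simp

definition card_below :: "'a set \<Rightarrow> 'a rel \<Rightarrow> 'a \<Rightarrow> nat" where
  "card_below Q R x = card {y \<in> Q. (y, x) \<in> R \<and> y \<noteq> x}"

lemma card_below_strict_mono:
  assumes "finite Q" "partial_order_on Q R" "(x, y) \<in> R" "x \<noteq> y"
  shows "card_below Q R x < card_below Q R y"
proof -
  have R: "R \<subseteq> Q \<times> Q" "trans R" "antisym R"
    using assms(2) unfolding partial_order_on_def preorder_on_def refl_on_def by auto
  have "{z \<in> Q. (z, x) \<in> R \<and> z \<noteq> x} \<subset> {z \<in> Q. (z, y) \<in> R \<and> z \<noteq> y}"
    using R assms(3,4) unfolding trans_def antisym_def by blast
  then show ?thesis
    unfolding card_below_def using assms(1) by (intro psubset_card_mono) auto
qed

lemma card_below_le: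
  assumes "finite Q" "x \<in> Q"
  shows "card_below Q R x \<le> card Q - 1"
proof -
  have "card_below Q R x \<le> card (Q - {x})"
    unfolding card_below_def using assms by (intro card_mono) auto
  then show ?thesis using assms by simp
qed

lemma freezing_periodic_potential_decreases:
  assumes "finite Q" "partial_order_on Q R"
    and frz: "\<forall>c\<in>configs Q. \<forall>z. (glob N f c z, c z) \<in> R"
    and c: "c \<in> configs Q" and "b > 0" and per: "\<forall>x. c x = c (x mod b)"
    and changed: "glob N f c \<noteq> c"
  shows "(\<Sum>z\<in>{0..<b}. card_below Q R (glob N f c z)) < (\<Sum>z\<in>{0..<b}. card_below Q R (c z))"
proof (rule sum_strict_mono_ex1)
  have step: "(glob N f c z, c z) \<in> R" for z using frz c by blast
  have lt: "card_below Q R (glob N f c z) < card_below Q R (c z)" if "glob N f c z \<noteq> c z" for z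
    using card_below_strict_mono[OF assms(1,2) step that] .
  then have le: "card_below Q R (glob N f c z) \<le> card_below Q R (c z)" for z
    by (cases "glob N f c z = c z") (auto intro: less_imp_le)
  then show "\<forall>z\<in>{0..<b}. card_below Q R (glob N f c z) \<le> card_below Q R (c z)" by blast
  obtain x where "glob N f c x \<noteq> c x" using changed by auto
  then have "glob N f c (x mod b) \<noteq> c (x mod b)"
    using per glob_periodic[OF per] by metis
  then show "\<exists>z\<in>{0..<b}. card_below Q R (glob N f c z) < card_below Q R (c z)"
    using lt \<open>b > 0\<close> by (intro bexI[of _ "x mod b"]) auto
qed simp

lemma freezing_periodic_orbit_bound:
  assumes CA: "is_CA Q N f" and "freezing Q N f"
    and c: "c \<in> configs Q" and "b > 0" and per: "\<forall>x. c x = c (x mod b)"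
    and changed: "(glob N f ^^ Suc t) c \<noteq> (glob N f ^^ t) c"
  shows "Suc t \<le> nat b * (card Q - 1)"
proof -
  obtain R where po: "partial_order_on Q R"
    and frz: "\<forall>c\<in>configs Q. \<forall>z. (glob N f c z, c z) \<in> R"
    using assms(2) unfolding freezing_def by blast
  have fin: "finite Q" using CA by (simp add: is_CA_def)
  define potential where "potential e = (\<Sum>z\<in>{0..<b}. card_below Q R (e z))" for e
  have "potential ((glob N f ^^ Suc s) c) < potential ((glob N f ^^ s) c)" if "s < Suc t" for s
  proof (unfold potential_def funpow.simps(2) comp_apply,
      rule freezing_periodic_potential_decreases[OF fin po frz _ \<open>b > 0\<close>])
    show "(glob N f ^^ s) c \<in> configs Q" using funpow_glob_in_configs[OF CA c] .
    show "\<forall>x. (glob N f ^^ s) c x = (glob N f ^^ s) c (x mod b)"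
      using funpow_glob_periodic[OF per] .
    show "glob N f ((glob N f ^^ s) c) \<noteq> (glob N f ^^ s) c"
    proof
      assume "glob N f ((glob N f ^^ s) c) = (glob N f ^^ s) c"
      then have fixed: "(glob N f ^^ Suc s) c = (glob N f ^^ s) c" by simp
      have "(glob N f ^^ Suc t) c = (glob N f ^^ s) c"
        using \<open>s < Suc t\<close> by (intro funpow_fixpoint_stable[OF fixed]) simp
      moreover have "(glob N f ^^ t) c = (glob N f ^^ s) c"
        using \<open>s < Suc t\<close> by (intro funpow_fixpoint_stable[OF fixed]) simp
      ultimately show False using changed by simp
    qed
  qed
  note decreasing = this
  have decay: "potential ((glob N f ^^ s) c) + s \<le> potential c" if "s \<le> Suc t" for s
    using that
  proof (induction s)
    case (Suc s)
    then have "potential ((glob N f ^^ s) c) + s \<le> potential c" "s < Suc t" by simp_all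
    with decreasing[of s] show ?case by linarith
  qed simp
  have "potential c \<le> nat b * (card Q - 1)"
  proof -
    have "potential c \<le> (\<Sum>z\<in>{0..<b}. card Q - 1)"
      unfolding potential_def using c fin by (intro sum_mono card_below_le) (auto simp: configs_def)
    then show ?thesis by simp
  qed
  with decay[of "Suc t"] show ?thesis by simp
qed

lemma phibar_const_periodic: "phibar b C \<phi> (\<lambda>_. a) x = phibar b C \<phi> (\<lambda>_. a) (x mod b)"
  by (simp add: phibar_def)

lemma phibar_eq_from:
  assumes "b > 0" "\<forall>j\<in>C. \<bar>j\<bar> \<le> int K" "\<forall>z\<ge>m. c z = c' z" "x \<ge> b * (m + int K)"
  shows "phibar b C \<phi> c x = phibar b C \<phi> c' x"
proof -
  have "b * (m + int K) div b \<le> x div b" using assms(1,4) by (intro zdiv_mono1) auto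
  then have "x div b \<ge> m + int K" using assms(1) by simp
  then have "restr C (\<lambda>j. c (x div b + j)) = restr C (\<lambda>j. c' (x div b + j))"
    using assms(2,3) by (fastforce simp: restr_def)
  then show ?thesis by (simp add: phibar_def)
qed

lemma phibar_neq_imp:
  assumes "phibar b C \<phi> c x \<noteq> phibar b C \<phi> c' x"
  obtains j where "j \<in> C" "c (x div b + j) \<noteq> c' (x div b + j)"
proof -
  have "restr C (\<lambda>j. c (x div b + j)) \<noteq> restr C (\<lambda>j. c' (x div b + j))"
    using assms by (auto simp: phibar_def)
  then show ?thesis using that by (auto simp: restr_def fun_eq_iff split: if_splits)
qed

locale block_simulation =
  fixes QF :: "'a set" and NF fF and QG :: "'b set" and NG fG
    and T :: nat and b :: int and C :: "int set" and \<phi> :: "(int \<Rightarrow> 'b) \<Rightarrow> int \<Rightarrow> 'a"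
  assumes CA_F: "is_CA QF NF fF" and CA_G: "is_CA QG NG fG"
    and b_pos: "b > 0" and finite_C: "finite C"
    and \<phi>_in: "\<forall>p. (\<forall>k\<in>C. p k \<in> QG) \<longrightarrow> (\<forall>r\<in>{0..<b}. \<phi> (restr C p) r \<in> QF)"
    and inj: "inj_on (phibar b C \<phi>) (configs QG)"
    and commute:
      "\<forall>c\<in>configs QG. phibar b C \<phi> (glob NG fG c) = (glob NF fF ^^ T) (phibar b C \<phi> c)"
begin

lemma phibar_in_configs:
  assumes "c \<in> configs QG"
  shows "phibar b C \<phi> c \<in> configs QF"
proof -
  have "\<phi> (restr C (\<lambda>k. c (x div b + k))) (x mod b) \<in> QF" for x
    using \<phi>_in assms b_pos by (simp add: configs_def)
  then show ?thesis unfolding phibar_def configs_def by simp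
qed

lemma phibar_funpow:
  assumes "c \<in> configs QG"
  shows "phibar b C \<phi> ((glob NG fG ^^ k) c) = (glob NF fF ^^ (k * T)) (phibar b C \<phi> c)"
proof (induction k)
  case (Suc k)
  have "(glob NG fG ^^ k) c \<in> configs QG" using funpow_glob_in_configs[OF CA_G assms] .
  then have "phibar b C \<phi> ((glob NG fG ^^ Suc k) c)
      = (glob NF fF ^^ T) (phibar b C \<phi> ((glob NG fG ^^ k) c))"
    using commute by simp
  also have "\<dots> = (glob NF fF ^^ (Suc k * T)) (phibar b C \<phi> c)"
    using Suc.IH by (simp add: funpow_add)
  finally show ?case .
qed simp

lemma freezing_const_orbit_bound:
  assumes "freezing QF NF fF" "(\<lambda>_. a) \<in> configs QG"
    and changed: "(glob NG fG ^^ Suc k) (\<lambda>_. a) \<noteq> (glob NG fG ^^ k) (\<lambda>_. a)"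
  shows "Suc (k * T) \<le> nat b * (card QF - 1)"
proof (rule freezing_periodic_orbit_bound[OF CA_F assms(1) phibar_in_configs[OF assms(2)] b_pos])
  let ?d = "phibar b C \<phi> (\<lambda>_. a)"
  show "\<forall>x. ?d x = ?d (x mod b)"
    by (intro allI phibar_const_periodic)
  have "(glob NG fG ^^ j) (\<lambda>_. a) \<in> configs QG" for j
    using funpow_glob_in_configs[OF CA_G assms(2)] .
  then have "(glob NF fF ^^ (Suc k * T)) ?d \<noteq> (glob NF fF ^^ (k * T)) ?d"
    using changed inj phibar_funpow[OF assms(2)] by (metis inj_on_def)
  moreover have "k * T \<le> Suc k * T" by simp
  ultimately show "(glob NF fF ^^ Suc (k * T)) ?d \<noteq> (glob NF fF ^^ (k * T)) ?d"
    using funpow_fixpoint_stable by metis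
qed

text \<open>The difference between \<open>c\<close> and \<open>c'\<close> travels right at speed one under \<open>G\<close>; in \<open>F\<close> it
  has to cross about \<open>b k\<close> cells in \<open>k T\<close> steps, at most \<open>r\<close> cells per step.\<close>

lemma signal_speed_bound:
  assumes r: "\<forall>n\<in>NF. \<bar>n\<bar> \<le> int r"
    and c: "c \<in> configs QG" and c': "c' \<in> configs QG" and agree: "\<forall>z\<ge>1. c z = c' z"
    and apart: "\<forall>k. (glob NG fG ^^ k) c \<noteq> (glob NG fG ^^ k) c'"
    and behind: "\<forall>k. \<forall>z < int k. (glob NG fG ^^ k) c z = (glob NG fG ^^ k) c' z"
  shows "b \<le> int (r * T)"
proof -
  obtain K where K: "\<forall>j\<in>C. \<bar>j\<bar> \<le> int K" using finite_int_set_bounded[OF finite_C] .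
  have "b * int k < b * (2 * int K + 1) + int (r * T) * int k" for k
  proof -
    let ?c\<^sub>k = "(glob NG fG ^^ k) c" and ?c'\<^sub>k = "(glob NG fG ^^ k) c'"
    have "phibar b C \<phi> ?c\<^sub>k \<noteq> phibar b C \<phi> ?c'\<^sub>k"
      using apart inj funpow_glob_in_configs[OF CA_G c] funpow_glob_in_configs[OF CA_G c']
      by (metis inj_on_def)
    then obtain x where x: "phibar b C \<phi> ?c\<^sub>k x \<noteq> phibar b C \<phi> ?c'\<^sub>k x" by auto
    have "x < b * (1 + int K) + int r * int (k * T)"
    proof (rule ccontr)
      assume "\<not> x < b * (1 + int K) + int r * int (k * T)"
      moreover have "\<forall>x \<ge> b * (1 + int K). phibar b C \<phi> c x = phibar b C \<phi> c' x"
        using phibar_eq_from[OF b_pos K agree] by blast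
      ultimately have "(glob NF fF ^^ (k * T)) (phibar b C \<phi> c) x
          = (glob NF fF ^^ (k * T)) (phibar b C \<phi> c') x"
        using funpow_glob_eq_from[OF r] by (meson not_less)
      then show False using x phibar_funpow[OF c] phibar_funpow[OF c'] by simp
    qed
    moreover have "b * (int k - int K) \<le> x"
    proof -
      obtain j where j: "j \<in> C" "?c\<^sub>k (x div b + j) \<noteq> ?c'\<^sub>k (x div b + j)"
        using phibar_neq_imp[OF x] .
      then have "int k \<le> x div b + j" using behind by (meson not_le)
      moreover have "j \<le> int K" using K j(1) by fastforce
      ultimately have "int k - int K \<le> x div b" by linarith
      then have "b * (int k - int K) \<le> b * (x div b)" using b_pos by simp
      also have "\<dots> \<le> x" using b_pos mult_div_mod_eq[of b x] pos_mod_sign[of b x] by linarith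
      finally show ?thesis .
    qed
    ultimately show ?thesis
      by (simp add: algebra_simps)
  qed
  then show ?thesis by (intro int_slope_le_of_linear_bound allI)
qed

end

lemma simulates_block_simulation:
  assumes "simulates QF NF fF QG NG fG" "is_CA QF NF fF" "is_CA QG NG fG"
  obtains T b C \<phi> where "block_simulation QF NF fF QG NG fG T b C \<phi>"
  using assms unfolding simulates_def block_simulation_def by blast

definition counter_signal_rule :: "(int \<Rightarrow> nat) \<Rightarrow> nat" where
  "counter_signal_rule p =
     (if p 0 \<ge> 4 then p 0 - 1
      else if p 0 = 3 then (if p (-1) \<in> {1, 2} then p (-1) else 3)
      else 0)"

lemma glob_counter_signal:
  "glob {-1, 0, 1} counter_signal_rule c z =
     (if c z \<ge> 4 then c z - 1
      else if c z = 3 then (if c (z - 1) \<in> {1, 2} then c (z - 1) else 3)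
      else 0)"
  by (simp add: glob_def counter_signal_rule_def restr_def)

lemma counter_signal_is_CA: "N \<ge> 3 \<Longrightarrow> is_CA {0..N} {-1, 0, 1} counter_signal_rule"
  unfolding is_CA_def by (auto simp: counter_signal_rule_def restr_def)

lemma counter_signal_freezing: "N \<ge> 3 \<Longrightarrow> freezing {0..N} {-1, 0, 1} counter_signal_rule"
  unfolding freezing_def
proof (intro exI[of _ "{(x, y). x \<in> {0..N} \<and> y \<in> {0..N} \<and> x \<le> y}"] conjI ballI allI)
  show "partial_order_on {0..N} {(x, y). x \<in> {0..N} \<and> y \<in> {0..N} \<and> x \<le> y}"
    unfolding partial_order_on_def preorder_on_def refl_on_def trans_def antisym_def by auto
  fix c :: "int \<Rightarrow> nat" and z
  assume "N \<ge> 3" "c \<in> configs {0..N}"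
  then show "(glob {-1, 0, 1} counter_signal_rule c z, c z)
      \<in> {(x, y). x \<in> {0..N} \<and> y \<in> {0..N} \<and> x \<le> y}"
    unfolding configs_def glob_counter_signal by (auto intro: le_trans[OF diff_le_self])
qed

lemma funpow_counter_signal_const:
  "k + 3 \<le> m \<Longrightarrow> (glob {-1, 0, 1} counter_signal_rule ^^ k) (\<lambda>_. m) = (\<lambda>_. m - k)"
  by (induction k) (auto simp: glob_counter_signal)

lemma funpow_counter_signal_const_changes:
  assumes "k + 4 \<le> m"
  shows "(glob {-1, 0, 1} counter_signal_rule ^^ Suc k) (\<lambda>_. m)
    \<noteq> (glob {-1, 0, 1} counter_signal_rule ^^ k) (\<lambda>_. m)"
proof -
  have "(glob {-1, 0, 1} counter_signal_rule ^^ Suc k) (\<lambda>_. m) = (\<lambda>_. m - Suc k)"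
    and "(glob {-1, 0, 1} counter_signal_rule ^^ k) (\<lambda>_. m) = (\<lambda>_. m - k)"
    using assms by (intro funpow_counter_signal_const; simp)+
  then show ?thesis using assms by (simp only:) (simp add: fun_eq_iff)
qed

definition signal :: "nat \<Rightarrow> nat \<Rightarrow> int \<Rightarrow> nat" where
  "signal s k z = (if 0 \<le> z \<and> z < int k then 0 else if z = int k then s else 3)"

lemma funpow_counter_signal_signal:
  "s \<in> {1, 2} \<Longrightarrow> (glob {-1, 0, 1} counter_signal_rule ^^ k) (signal s 0) = signal s k"
  by (induction k) (auto simp: glob_counter_signal signal_def fun_eq_iff)

lemma signal_in_configs: "N \<ge> 3 \<Longrightarrow> s \<in> {1, 2} \<Longrightarrow> signal s k \<in> configs {0..N}"
  by (auto simp: configs_def signal_def)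

lemma counter_signal_simulation_countdown:
  assumes "block_simulation QF NF fF {0..N} {-1, 0, 1} counter_signal_rule T b C \<phi>"
    and "freezing QF NF fF" and "N \<ge> 4"
  shows "Suc ((N - 4) * T) \<le> nat b * (card QF - 1)"
proof -
  interpret block_simulation QF NF fF "{0..N}" "{-1, 0, 1}" counter_signal_rule T b C \<phi>
    by fact
  show ?thesis
    by (rule freezing_const_orbit_bound[OF assms(2), where a = N])
      (simp add: configs_def, rule funpow_counter_signal_const_changes, use assms(3) in simp)
qed

lemma counter_signal_simulation_speed:
  assumes "block_simulation QF NF fF {0..N} {-1, 0, 1} counter_signal_rule T b C \<phi>"
    and "N \<ge> 3" and r: "\<forall>n\<in>NF. \<bar>n\<bar> \<le> int r"
  shows "b \<le> int (r * T)"
proof -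
  interpret block_simulation QF NF fF "{0..N}" "{-1, 0, 1}" counter_signal_rule T b C \<phi>
    by fact
  let ?G = "glob {-1, 0, 1} counter_signal_rule"
  show ?thesis
  proof (rule signal_speed_bound[OF r])
    show "signal 1 0 \<in> configs {0..N}" "signal 2 0 \<in> configs {0..N}"
      using \<open>N \<ge> 3\<close> by (simp_all add: signal_in_configs)
    show "\<forall>z\<ge>1. signal 1 0 z = signal 2 0 z" by (simp add: signal_def)
    show "\<forall>k. (?G ^^ k) (signal 1 0) \<noteq> (?G ^^ k) (signal 2 0)"
    proof
      fix k
      have "signal 1 k (int k) \<noteq> signal 2 k (int k)" by (simp add: signal_def)
      then show "(?G ^^ k) (signal 1 0) \<noteq> (?G ^^ k) (signal 2 0)"
        by (auto simp: funpow_counter_signal_signal)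
    qed
    show "\<forall>k. \<forall>z < int k. (?G ^^ k) (signal 1 0) z = (?G ^^ k) (signal 2 0) z"
      by (simp add: funpow_counter_signal_signal signal_def)
  qed
qed

theorem theorem9:
  shows "\<not> (\<exists>(QF :: 'a set) NF fF. is_CA QF NF fF \<and> freezing QF NF fF \<and>
            (\<forall>(QG :: nat set) fG. is_CA QG {-1, 0, 1} fG \<and> freezing QG {-1, 0, 1} fG
                \<longrightarrow> simulates QF NF fF QG {-1, 0, 1} fG))"
proof
  assume "\<exists>(QF :: 'a set) NF fF. is_CA QF NF fF \<and> freezing QF NF fF \<and>
            (\<forall>(QG :: nat set) fG. is_CA QG {-1, 0, 1} fG \<and> freezing QG {-1, 0, 1} fG
                \<longrightarrow> simulates QF NF fF QG {-1, 0, 1} fG)"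
  then obtain QF :: "'a set" and NF fF where CA: "is_CA QF NF fF" and frz: "freezing QF NF fF"
    and universal: "\<forall>(QG :: nat set) fG. is_CA QG {-1, 0, 1} fG \<and> freezing QG {-1, 0, 1} fG
                \<longrightarrow> simulates QF NF fF QG {-1, 0, 1} fG" by blast
  obtain r where r: "\<forall>n\<in>NF. \<bar>n\<bar> \<le> int r"
    using CA finite_int_set_bounded unfolding is_CA_def by blast
  define N where "N = r * (card QF - 1) + 4"
  then have N: "N \<ge> 3" by simp
  then have "simulates QF NF fF {0..N} {-1, 0, 1} counter_signal_rule"
    using universal counter_signal_is_CA counter_signal_freezing by blast
  then obtain T b C \<phi>
    where sim: "block_simulation QF NF fF {0..N} {-1, 0, 1} counter_signal_rule T b C \<phi>"
    using simulates_block_simulation CA counter_signal_is_CA[OF N] by blast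
  have "Suc ((N - 4) * T) \<le> nat b * (card QF - 1)"
    using counter_signal_simulation_countdown[OF sim frz] by (simp add: N_def)
  moreover have "b \<le> int (r * T)"
    using counter_signal_simulation_speed[OF sim N r] .
  then have "nat b * (card QF - 1) \<le> (N - 4) * T"
    by (simp add: N_def nat_le_iff mult_right_mono)
  ultimately show False by simp
qed

end
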